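(* Let $X$ and $Y$ be independent random variables, each with the unit Fréchet distribution $F(x)=e^{-1/x}$, $x>0$, and let $(X_i,Y_i)$, $i=1,\dots,n$, be a random sample (i.i.d. copies) of $(X,Y)$. Then $$\lim_{n\to\infty}\mathbb{P}\Big\{n^{-1}\Big(\max_{i\le n}Y_i/X_i+1\Big)\le x\Big\}=e^{-1/x},\qquad x>0,$$ and the random variables $\max_{i\le n}Y_i/X_i$ and $\min_{i\le n}Y_i/X_i$ are asymptotically independent, in the sense that for all $x,y>0$, $$\lim_{n\to\infty}\mathbb{P}\Big\{n^{-1}\Big(\max_{i\le n}Y_i/X_i+1\Big)\le x,\ n^{-1}\Big(\max_{i\le n}X_i/Y_i+1\Big)\le y\Big\}=e^{-1/x-1/y}.$$ Furthermore, $n q_n$ converges in distribution, as $n\to\infty$, to a gamma$(2,1)$ random variable (density $t e^{-t}$, $t>0$), where $$q_n=\frac{\max_{i\le n}\{Y_i/X_i\}+\max_{i\le n}\{X_i/Y_i\}-2}{\max_{i\le n}\{Y_i/X_i\}\times\max_{i\le n}\{X_i/Y_i\}-1}.$$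
   Context: The quantity $q_n$ is called the quotient correlation coefficient of the sample $(X_i,Y_i)_{i\le n}$ of positive random variables. *)

theory Defs
  imports "HOL-Probability.Probability"
begin

definition frechet_cdf :: "real \<Rightarrow> real" where
  "frechet_cdf x = (if x > 0 then exp (- 1 / x) else 0)"

definition gamma21_density :: "real \<Rightarrow> real" where
  "gamma21_density t = (if t > 0 then t * exp (- t) else 0)"

definition gamma21 :: "real measure" where
  "gamma21 = density lborel (\<lambda>t. ennreal (gamma21_density t))"

definition max_ratio :: "(nat \<Rightarrow> 'a \<Rightarrow> real) \<Rightarrow> (nat \<Rightarrow> 'a \<Rightarrow> real) \<Rightarrow> nat \<Rightarrow> 'a \<Rightarrow> real" where
  "max_ratio A B n \<omega> = Max ((\<lambda>i. A i \<omega> / B i \<omega>) ` {..<n})"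

definition quot_corr :: "(nat \<Rightarrow> 'a \<Rightarrow> real) \<Rightarrow> (nat \<Rightarrow> 'a \<Rightarrow> real) \<Rightarrow> nat \<Rightarrow> 'a \<Rightarrow> real" where
  "quot_corr X Y n \<omega> =
     (max_ratio Y X n \<omega> + max_ratio X Y n \<omega> - 2) /
     (max_ratio Y X n \<omega> * max_ratio X Y n \<omega> - 1)"

end

theory Submission
  imports Defs
begin

text \<open>
  Put \<open>W\<^sub>i = Y\<^sub>i / (X\<^sub>i + Y\<^sub>i)\<close>. Since \<open>1/X\<^sub>i\<close> and \<open>1/Y\<^sub>i\<close> are independent standard
  exponential variables, the \<open>W\<^sub>i\<close> are independent and uniform on \<open>[0, 1]\<close>, and the two maximal
  ratios are monotone functions of their extremes:
  \<open>1/(1 + max Y\<^sub>i/X\<^sub>i) = 1 - max W\<^sub>i\<close> and \<open>1/(1 + max X\<^sub>i/Y\<^sub>i) = min W\<^sub>i\<close>.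
  The first two limits are then the computations \<open>(1 - c/n)\<^sup>n \<longrightarrow> e\<^sup>-\<^sup>c\<close> for uniform extremes.
  Writing \<open>R\<^sub>n = max W\<^sub>i - min W\<^sub>i\<close> for the sample range, an elementary inequality squeezes
  \<open>q\<^sub>n\<close> between \<open>1 - R\<^sub>n\<close> and \<open>(1 - R\<^sub>n)/R\<^sub>n\<close>; the law
  \<open>P(R\<^sub>n < r) = r\<^sup>n + n (1 - r) r\<^sup>n\<^sup>-\<^sup>1\<close> of the range, obtained by slicing according to the
  value of \<open>min W\<^sub>i\<close>, shows that \<open>n (1 - R\<^sub>n)\<close>, and hence \<open>n q\<^sub>n\<close>, is asymptotically gamma(2,1).
\<close>

lemma tendsto_one_if_scaled_deviation_tendsto:
  fixes a :: "nat \<Rightarrow> real"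
  assumes "(\<lambda>n. real n * (a n - 1)) \<longlonglongrightarrow> L"
  shows "a \<longlonglongrightarrow> 1"
proof -
  have "(\<lambda>n. real n * (a n - 1) * inverse (real n)) \<longlonglongrightarrow> L * 0"
    by (intro tendsto_mult assms lim_inverse_n)
  moreover have "\<forall>\<^sub>F n in sequentially. real n * (a n - 1) * inverse (real n) = a n - 1"
    using eventually_gt_at_top[of 0] by eventually_elim auto
  ultimately have "(\<lambda>n. a n - 1) \<longlonglongrightarrow> 0"
    by (simp add: tendsto_cong)
  then show ?thesis
    by (simp add: LIM_zero_iff)
qed

lemma tendsto_power_sequentially:
  fixes a :: "nat \<Rightarrow> real"
  assumes L: "(\<lambda>n. real n * (a n - 1)) \<longlonglongrightarrow> L"
  shows "(\<lambda>n. a n ^ n) \<longlonglongrightarrow> exp L"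
proof -
  have a: "a \<longlonglongrightarrow> 1"
    using L by (rule tendsto_one_if_scaled_deviation_tendsto)
  then have pos: "\<forall>\<^sub>F n in sequentially. 0 < a n"
    by (rule order_tendstoD) simp
  have lower: "(\<lambda>n. real n * (a n - 1) / a n) \<longlonglongrightarrow> L"
    using tendsto_divide[OF L a] by simp
  text \<open>Squeeze \<open>n ln a\<^sub>n\<close> by \<open>1 - 1/x \<le> ln x \<le> x - 1\<close>.\<close>
  have "(\<lambda>n. real n * ln (a n)) \<longlonglongrightarrow> L"
  proof (rule tendsto_sandwich[OF _ _ lower L])
    show "\<forall>\<^sub>F n in sequentially. real n * (a n - 1) / a n \<le> real n * ln (a n)"
      using pos
    proof eventually_elim
      case (elim n)
      have "ln (inverse (a n)) \<le> inverse (a n) - 1"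
        using elim by (intro ln_le_minus_one) auto
      then have "1 - inverse (a n) \<le> ln (a n)"
        using elim by (simp add: ln_inverse)
      moreover have "(a n - 1) / a n = 1 - inverse (a n)"
        using elim by (simp add: field_simps)
      ultimately have "(a n - 1) / a n \<le> ln (a n)"
        by simp
      then show ?case
        by (metis mult_left_mono of_nat_0_le_iff times_divide_eq_right)
    qed
    show "\<forall>\<^sub>F n in sequentially. real n * ln (a n) \<le> real n * (a n - 1)"
      using pos by eventually_elim (intro mult_left_mono ln_le_minus_one, auto)
  qed
  then have "(\<lambda>n. exp (real n * ln (a n))) \<longlonglongrightarrow> exp L"
    by (rule tendsto_exp)
  moreover have "\<forall>\<^sub>F n in sequentially. exp (real n * ln (a n)) = a n ^ n"
    using pos by eventually_elim (simp add: exp_of_nat_mult)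
  ultimately show ?thesis
    by (simp add: tendsto_cong)
qed

lemma tendsto_power_pred_sequentially:
  fixes a :: "nat \<Rightarrow> real"
  assumes L: "(\<lambda>n. real n * (a n - 1)) \<longlonglongrightarrow> L"
  shows "(\<lambda>n. a n ^ (n - 1)) \<longlonglongrightarrow> exp L"
proof -
  have a: "a \<longlonglongrightarrow> 1"
    using L by (rule tendsto_one_if_scaled_deviation_tendsto)
  then have "\<forall>\<^sub>F n in sequentially. 0 < a n"
    by (rule order_tendstoD) simp
  then have "\<forall>\<^sub>F n in sequentially. a n ^ n / a n = a n ^ (n - 1)"
    using eventually_gt_at_top[of 0] by eventually_elim (simp add: power_eq_if)
  moreover have "(\<lambda>n. a n ^ n / a n) \<longlonglongrightarrow> exp L / 1"
    by (intro tendsto_divide tendsto_power_sequentially L a) simp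
  ultimately show ?thesis
    by (simp add: tendsto_cong)
qed

lemma power_Suc_diff_bounds:
  fixes a b :: real
  assumes "0 \<le> a" "a \<le> b"
  shows "real (Suc m) * (b - a) * a ^ m \<le> b ^ Suc m - a ^ Suc m"
    and "b ^ Suc m - a ^ Suc m \<le> real (Suc m) * (b - a) * b ^ m"
proof -
  have sum: "b ^ Suc m - a ^ Suc m = (b - a) * (\<Sum>p<Suc m. b ^ p * a ^ (m - p))"
    by (rule diff_power_eq_sum)
  have "a ^ m \<le> b ^ p * a ^ (m - p)" and "b ^ p * a ^ (m - p) \<le> b ^ m" if "p < Suc m" for p
  proof -
    have "a ^ p * a ^ (m - p) \<le> b ^ p * a ^ (m - p)" "b ^ p * a ^ (m - p) \<le> b ^ p * b ^ (m - p)"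
      using assms by (intro mult_right_mono mult_left_mono power_mono; simp)+
    then show "a ^ m \<le> b ^ p * a ^ (m - p)" "b ^ p * a ^ (m - p) \<le> b ^ m"
      using that by (simp_all flip: power_add)
  qed
  then have "(\<Sum>p<Suc m. a ^ m) \<le> (\<Sum>p<Suc m. b ^ p * a ^ (m - p))"
    and "(\<Sum>p<Suc m. b ^ p * a ^ (m - p)) \<le> (\<Sum>p<Suc m. b ^ m)"
    by (intro sum_mono; simp)+
  then have "real (Suc m) * a ^ m \<le> (\<Sum>p<Suc m. b ^ p * a ^ (m - p))"
    and "(\<Sum>p<Suc m. b ^ p * a ^ (m - p)) \<le> real (Suc m) * b ^ m"
    by (simp_all only: sum_constant card_lessThan)
  then show "real (Suc m) * (b - a) * a ^ m \<le> b ^ Suc m - a ^ Suc m"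
    and "b ^ Suc m - a ^ Suc m \<le> real (Suc m) * (b - a) * b ^ m"
    unfolding sum using assms
    by (metis diff_ge_0_iff_ge mult.assoc mult.commute mult_left_mono)+
qed

lemma mono_on_Max_commute:
  fixes g :: "'a::linorder \<Rightarrow> 'b::linorder"
  assumes "mono_on S g" "finite A" "A \<noteq> {}" "A \<subseteq> S"
  shows "g (Max A) = Max (g ` A)"
proof (rule Max_eqI[symmetric])
  have "Max A \<in> A"
    using assms by simp
  then show "g (Max A) \<in> g ` A"
    by simp
  show "y \<le> g (Max A)" if y: "y \<in> g ` A" for y
  proof -
    obtain x where "x \<in> A" "y = g x"
      using y by blast
    moreover have "x \<le> Max A"
      using \<open>x \<in> A\<close> assms(2) by simp
    ultimately show ?thesis
      using assms(1,4) \<open>Max A \<in> A\<close> by (auto intro: monotone_onD)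
  qed
qed (use assms in simp)

lemma antimono_on_Max_commute:
  fixes g :: "'a::linorder \<Rightarrow> 'b::linorder"
  assumes "antimono_on S g" "finite A" "A \<noteq> {}" "A \<subseteq> S"
  shows "g (Max A) = Min (g ` A)"
proof (rule Min_eqI[symmetric])
  have "Max A \<in> A"
    using assms by simp
  then show "g (Max A) \<in> g ` A"
    by simp
  show "g (Max A) \<le> y" if y: "y \<in> g ` A" for y
  proof -
    obtain x where "x \<in> A" "y = g x"
      using y by blast
    moreover have "x \<le> Max A"
      using \<open>x \<in> A\<close> assms(2) by simp
    ultimately show ?thesis
      using assms(1,4) \<open>Max A \<in> A\<close> by (auto intro: monotone_onD)
  qed
qed (use assms in simp)

lemma quot_corr_bounds:
  fixes u v :: real
  defines "T \<equiv> 1 / (1 + u) + 1 / (1 + v)"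
  assumes "0 < u" "0 < v" "T < 1"
  shows "T \<le> (u + v - 2) / (u * v - 1)" and "(u + v - 2) / (u * v - 1) \<le> T / (1 - T)"
proof -
  have P: "0 < (1 + u) * (1 + v)"
    using assms by simp
  have T: "T = (2 + u + v) / ((1 + u) * (1 + v))"
    using assms by (simp add: T_def field_simps)
  have D: "0 < u * v - 1"
    using \<open>T < 1\<close> P unfolding T by (simp add: divide_less_eq algebra_simps)
  have "(u + v - 2) * ((1 + u) * (1 + v)) - (2 + u + v) * (u * v - 1) = (u - v)\<^sup>2"
    by (simp add: algebra_simps power2_eq_square)
  then have "(2 + u + v) * (u * v - 1) \<le> (u + v - 2) * ((1 + u) * (1 + v))"
    by (smt (verit) zero_le_power2)
  then show "T \<le> (u + v - 2) / (u * v - 1)"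
    using P D unfolding T by (simp add: divide_le_eq le_divide_eq mult.commute mult.left_commute)
  have "1 - T = (u * v - 1) / ((1 + u) * (1 + v))"
    using P unfolding T by (simp add: field_simps)
  then have "T / (1 - T) = (2 + u + v) / (u * v - 1)"
    using P D assms(2,3) unfolding T by simp
  then show "(u + v - 2) / (u * v - 1) \<le> T / (1 - T)"
    using D by (simp add: divide_right_mono)
qed

lemma grid_index_exists:
  fixes x d :: real
  assumes "0 < d" "0 \<le> x"
  obtains j where "j \<le> L" "real j * d \<le> x" "j < L \<longrightarrow> x < real (Suc j) * d"
proof -
  define k where "k = nat \<lfloor>x / d\<rfloor>"
  have "real k = of_int \<lfloor>x / d\<rfloor>"
    using assms by (simp add: k_def)
  then have "real k \<le> x / d" "x / d < real k + 1"
    by linarith+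
  then have k: "real k * d \<le> x" "x < real (Suc k) * d"
    using assms by (simp_all add: field_simps)
  show ?thesis
  proof (cases "k \<le> L")
    case True
    then show ?thesis
      using k that by blast
  next
    case False
    then have "real L * d \<le> real k * d"
      using assms by (intro mult_right_mono) auto
    then show ?thesis
      using k that[of L] by simp
  qed
qed

lemma (in prob_space) emeasure_less_indep:
  fixes A B :: "'a \<Rightarrow> real"
  assumes A: "distributed M lborel A f" and [measurable]: "B \<in> borel_measurable M"
    and ind: "indep_var borel A borel B"
  shows "emeasure M {\<omega> \<in> space M. A \<omega> < B \<omega>} =
    (\<integral>\<^sup>+x. f x * emeasure M {\<omega> \<in> space M. x < B \<omega>} \<partial>lborel)"
proof -
  have [measurable]: "A \<in> borel_measurable M"
    using distributed_measurable[OF A] by simp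
  define PA where "PA = distr M borel A"
  define PB where "PB = distr M borel B"
  interpret PB: prob_space PB
    unfolding PB_def by (rule prob_space_distr) simp
  define S where "S = {p :: real \<times> real. fst p < snd p}"
  have S_sets: "S \<in> sets (PA \<Otimes>\<^sub>M PB)"
  proof -
    have "{p \<in> space (borel \<Otimes>\<^sub>M borel). fst p < (snd p :: real)} \<in> sets (borel \<Otimes>\<^sub>M borel)"
      by measurable
    then show ?thesis
      by (simp add: S_def PA_def PB_def space_pair_measure)
  qed
  have emeasure_section: "emeasure PB (Pair x -` S) = emeasure M {\<omega> \<in> space M. x < B \<omega>}" for x
    unfolding PB_def by (subst emeasure_distr) (auto simp: S_def intro!: arg_cong[where f="emeasure M"])
  have section_measurable: "(\<lambda>x. emeasure PB (Pair x -` S)) \<in> borel_measurable borel"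
    using PB.measurable_emeasure_Pair[OF S_sets] by (simp add: PA_def)
  have "emeasure M {\<omega> \<in> space M. A \<omega> < B \<omega>} = emeasure M ((\<lambda>\<omega>. (A \<omega>, B \<omega>)) -` S \<inter> space M)"
    by (auto simp: S_def intro!: arg_cong[where f="emeasure M"])
  also have "\<dots> = emeasure (PA \<Otimes>\<^sub>M PB) S"
    using ind S_sets unfolding PA_def PB_def by (simp add: indep_var_distribution_eq emeasure_distr)
  also have "\<dots> = (\<integral>\<^sup>+x. emeasure PB (Pair x -` S) \<partial>PA)"
    by (rule PB.emeasure_pair_measure_alt[OF S_sets])
  also have "\<dots> = (\<integral>\<^sup>+\<omega>. emeasure PB (Pair (A \<omega>) -` S) \<partial>M)"
    unfolding PA_def using section_measurable by (simp add: nn_integral_distr)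
  also have "\<dots> = (\<integral>\<^sup>+x. f x * emeasure PB (Pair x -` S) \<partial>lborel)"
    using section_measurable by (intro distributed_nn_integral[OF A, symmetric]) simp
  finally show ?thesis
    by (simp add: emeasure_section)
qed

lemma (in prob_space) prob_exponential_less:
  assumes l: "0 < l" and u: "0 < u"
    and A: "distributed M lborel A (exponential_density l)"
    and B: "distributed M lborel B (exponential_density u)"
    and ind: "indep_var borel A borel B"
  shows "prob {\<omega> \<in> space M. A \<omega> < B \<omega>} = l / (l + u)"
proof -
  have [measurable]: "B \<in> borel_measurable M"
    using B u by (simp add: exponential_distributed_iff)
  have "emeasure M {\<omega> \<in> space M. A \<omega> < B \<omega>} =
      (\<integral>\<^sup>+x. ennreal (exponential_density l x) * emeasure M {\<omega> \<in> space M. x < B \<omega>} \<partial>lborel)"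
    by (rule emeasure_less_indep[OF A _ ind]) simp
  also have "\<dots> = (\<integral>\<^sup>+x. ennreal (l / (l + u)) * ennreal (exponential_density (l + u) x) \<partial>lborel)"
  proof (intro nn_integral_cong)
    fix x :: real
    have "l * exp (- x * l) * exp (- x * u) = l / (l + u) * ((l + u) * exp (- x * (l + u)))"
      using l u by (simp add: field_simps flip: exp_add)
    then show "ennreal (exponential_density l x) * emeasure M {\<omega> \<in> space M. x < B \<omega>} =
        ennreal (l / (l + u)) * ennreal (exponential_density (l + u) x)"
      using l u exponential_distributedD_gt[OF B _ u, of x]
      by (cases "x < 0") (simp_all add: exponential_density_def emeasure_eq_measure flip: ennreal_mult')
  qed
  also have "\<dots> = ennreal (l / (l + u))"
    using nn_integral_erlang_ith_moment[of "l + u" 0 0] l u by (simp add: nn_integral_cmult)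
  finally show ?thesis
    using l u by (simp add: emeasure_eq_measure)
qed

lemma isCont_frechet_cdf: "0 < c \<Longrightarrow> isCont frechet_cdf c"
proof -
  assume c: "0 < c"
  have "\<forall>\<^sub>F x in nhds c. frechet_cdf x = exp (- 1 / x)"
    using eventually_nhds_in_open[of "{0<..}" c] c
    by (auto elim!: eventually_mono simp: frechet_cdf_def)
  moreover have "isCont (\<lambda>x. exp (- 1 / x)) c"
    using c by (intro continuous_intros) auto
  ultimately show ?thesis
    by (simp add: isCont_cong)
qed

lemma (in prob_space) prob_le_eq_cdf:
  assumes "Z \<in> borel_measurable M"
  shows "prob {\<omega> \<in> space M. Z \<omega> \<le> c} = cdf (distr M borel Z) c"
  using assms unfolding cdf_def by (subst measure_distr) (auto intro!: arg_cong[where f=prob])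

lemma (in prob_space) prob_mono_AE:
  assumes "AE x in M. P x \<longrightarrow> Q x" "{x \<in> space M. Q x} \<in> events"
  shows "prob {x \<in> space M. P x} \<le> prob {x \<in> space M. Q x}"
  using assms(1) by (intro finite_measure_mono_AE[OF _ assms(2)]) (auto elim: eventually_mono)

context prob_space
begin

context
  fixes Z :: "'a \<Rightarrow> real"
  assumes Z_measurable[measurable]: "Z \<in> borel_measurable M"
    and Z_frechet: "cdf (distr M borel Z) = frechet_cdf"
begin

lemma prob_frechet_le: "prob {\<omega> \<in> space M. Z \<omega> \<le> c} = frechet_cdf c"
  by (simp add: prob_le_eq_cdf Z_frechet)

lemma AE_frechet_pos: "AE \<omega> in M. 0 < Z \<omega>"
proof -
  have "prob {\<omega> \<in> space M. Z \<omega> \<le> 0} = 0"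
    using prob_frechet_le[of 0] by (simp add: frechet_cdf_def)
  then show ?thesis
    by (subst (asm) prob_Collect_eq_0) (auto simp: not_le)
qed

lemma prob_frechet_eq: "0 < c \<Longrightarrow> prob {\<omega> \<in> space M. Z \<omega> = c} = 0"
proof -
  assume "0 < c"
  interpret D: real_distribution "distr M borel Z"
    by standard (auto intro: prob_space_distr)
  have "measure (distr M borel Z) {c} = 0"
    using isCont_frechet_cdf[OF \<open>0 < c\<close>] Z_frechet by (simp flip: D.isCont_cdf)
  then show ?thesis
    by (subst (asm) measure_distr) (auto intro!: arg_cong[where f=prob] elim!: back_subst[where P="\<lambda>x. x = 0"])
qed

lemma frechet_inverse_exponential: "distributed M lborel (\<lambda>\<omega>. 1 / Z \<omega>) (exponential_density 1)"
proof (rule exponential_distributedI)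
  fix a :: real
  assume "0 \<le> a"
  have "prob {\<omega> \<in> space M. 1 / Z \<omega> \<le> a} = 1 - exp (- a)"
  proof (cases "a = 0")
    case True
    then show ?thesis
      using prob_frechet_le[of 0] by (simp add: divide_le_0_iff frechet_cdf_def)
  next
    case False
    then have "0 < a"
      using \<open>0 \<le> a\<close> by simp
    have "prob {\<omega> \<in> space M. 1 / Z \<omega> \<le> a} = prob {\<omega> \<in> space M. 1 / a \<le> Z \<omega>}"
      by (rule prob_eq_AE) (use AE_frechet_pos \<open>0 < a\<close> in \<open>auto simp: field_simps\<close>)
    also have "{\<omega> \<in> space M. 1 / a \<le> Z \<omega>} =
        space M - ({\<omega> \<in> space M. Z \<omega> \<le> 1 / a} - {\<omega> \<in> space M. Z \<omega> = 1 / a})"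
      by auto
    also have "prob \<dots> = 1 - (prob {\<omega> \<in> space M. Z \<omega> \<le> 1 / a} - prob {\<omega> \<in> space M. Z \<omega> = 1 / a})"
      by (subst prob_compl, simp, subst finite_measure_Diff) auto
    also have "\<dots> = 1 - exp (- a)"
      using prob_frechet_le[of "1 / a"] prob_frechet_eq[of "1 / a"] \<open>0 < a\<close>
      by (simp add: frechet_cdf_def)
    finally show ?thesis .
  qed
  then show "emeasure M {\<omega> \<in> space M. 1 / Z \<omega> \<le> a} = 1 - ennreal (exp (- a * 1))"
    using \<open>0 \<le> a\<close> by (simp add: emeasure_eq_measure ennreal_minus flip: ennreal_1 del: ennreal_1)
qed simp_all

end

end

lemma cdf_gamma21: "cdf gamma21 t = (if 0 \<le> t then 1 - (exp (- t) + t * exp (- t)) else 0)"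
proof -
  have "gamma21 = density lborel (erlang_density 1 1)"
    unfolding gamma21_def
    by (intro arg_cong[where f="density lborel"] ext) (simp add: gamma21_density_def erlang_density_def)
  then have "cdf gamma21 t = enn2real (emeasure (density lborel (erlang_density 1 1)) {..t})"
    by (simp add: cdf_def measure_def)
  also have "\<dots> = erlang_CDF 1 1 t"
    by (simp add: emeasure_erlang_density)
  finally show ?thesis
    by (simp add: erlang_CDF_def)
qed

locale frechet_sample = prob_space M for M :: "'a measure" +
  fixes X Y :: "nat \<Rightarrow> 'a \<Rightarrow> real"
  assumes X_measurable[measurable]: "\<And>i. X i \<in> borel_measurable M"
    and Y_measurable[measurable]: "\<And>i. Y i \<in> borel_measurable M"
    and indep_X_Y: "indep_vars (\<lambda>_. borel) (\<lambda>k. case k of Inl i \<Rightarrow> X i | Inr i \<Rightarrow> Y i) UNIV"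
    and X_frechet: "\<And>i. cdf (distr M borel (X i)) = frechet_cdf"
    and Y_frechet: "\<And>i. cdf (distr M borel (Y i)) = frechet_cdf"
begin

definition W :: "nat \<Rightarrow> 'a \<Rightarrow> real"
  where "W i \<omega> = Y i \<omega> / (X i \<omega> + Y i \<omega>)"

definition wmin :: "nat \<Rightarrow> 'a \<Rightarrow> real"
  where "wmin n \<omega> = Min ((\<lambda>i. W i \<omega>) ` {..<n})"

definition wmax :: "nat \<Rightarrow> 'a \<Rightarrow> real"
  where "wmax n \<omega> = Max ((\<lambda>i. W i \<omega>) ` {..<n})"

lemma W_measurable[measurable]: "W i \<in> borel_measurable M"
  unfolding W_def by measurable

lemma wmin_measurable[measurable]: "wmin n \<in> borel_measurable M"
  unfolding wmin_def by measurable

lemma wmax_measurable[measurable]: "wmax n \<in> borel_measurable M"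
  unfolding wmax_def by measurable

lemma le_wmin_iff: "0 < n \<Longrightarrow> a \<le> wmin n \<omega> \<longleftrightarrow> (\<forall>i<n. a \<le> W i \<omega>)"
  unfolding wmin_def by (subst Min_ge_iff) auto

lemma wmax_le_iff: "0 < n \<Longrightarrow> wmax n \<omega> \<le> b \<longleftrightarrow> (\<forall>i<n. W i \<omega> \<le> b)"
  unfolding wmax_def by (subst Max_le_iff) auto

lemma wmax_less_iff: "0 < n \<Longrightarrow> wmax n \<omega> < b \<longleftrightarrow> (\<forall>i<n. W i \<omega> < b)"
  unfolding wmax_def by (subst Max_less_iff) auto

lemma indep_var_Y_X: "indep_var borel (Y i) borel (X i)"
proof -
  let ?Z = "\<lambda>k. case k of Inl i \<Rightarrow> X i | Inr i \<Rightarrow> Y i"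
  have "indep_var (PiM {Inr i} (\<lambda>_. borel)) (\<lambda>\<omega>. restrict (\<lambda>k. ?Z k \<omega>) {Inr i})
      (PiM {Inl i} (\<lambda>_. borel)) (\<lambda>\<omega>. restrict (\<lambda>k. ?Z k \<omega>) {Inl i})"
    by (intro indep_var_restrict[OF indep_X_Y]) auto
  then have "indep_var borel ((\<lambda>f. f (Inr i)) \<circ> (\<lambda>\<omega>. restrict (\<lambda>k. ?Z k \<omega>) {Inr i}))
      borel ((\<lambda>f. f (Inl i)) \<circ> (\<lambda>\<omega>. restrict (\<lambda>k. ?Z k \<omega>) {Inl i}))"
    by (rule indep_var_compose) measurable
  then show ?thesis
    by (simp add: comp_def)
qed

lemma indep_vars_W: "indep_vars (\<lambda>_. borel) W UNIV"
proof -
  let ?Z = "\<lambda>k. case k of Inl i \<Rightarrow> X i | Inr i \<Rightarrow> Y i"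
  let ?K = "\<lambda>j. {Inl j, Inr j} :: (nat + nat) set"
  have "indep_vars (\<lambda>j. PiM (?K j) (\<lambda>_. borel)) (\<lambda>j \<omega>. restrict (\<lambda>k. ?Z k \<omega>) (?K j)) UNIV"
    by (intro indep_vars_restrict[OF indep_X_Y]) (auto simp: disjoint_family_on_def)
  then have "indep_vars (\<lambda>_. borel)
      (\<lambda>j \<omega>. (\<lambda>f. f (Inr j) / (f (Inl j) + f (Inr j))) (restrict (\<lambda>k. ?Z k \<omega>) (?K j))) UNIV"
    by (rule indep_vars_compose2) measurable
  then show ?thesis
    by (simp add: W_def[abs_def])
qed

lemma AE_X_Y_pos: "AE \<omega> in M. \<forall>i. 0 < X i \<omega> \<and> 0 < Y i \<omega>"
  unfolding AE_all_countable
  using AE_frechet_pos[OF X_measurable X_frechet] AE_frechet_pos[OF Y_measurable Y_frechet] by auto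

lemma AE_W_bounds: "AE \<omega> in M. \<forall>i. 0 < W i \<omega> \<and> W i \<omega> < 1"
  using AE_X_Y_pos by eventually_elim (simp add: W_def divide_less_eq add_pos_pos)

text \<open>\<open>w < W\<^sub>i\<close> says \<open>1/Y\<^sub>i < c (1/X\<^sub>i)\<close> with \<open>c = (1 - w)/w\<close>, a comparison of two independent
  exponential variables.\<close>
lemma prob_W_greater:
  assumes w: "0 < w" "w < 1"
  shows "prob {\<omega> \<in> space M. w < W i \<omega>} = 1 - w"
proof -
  define c where "c = (1 - w) / w"
  have c: "0 < c"
    using w by (simp add: c_def)
  have "prob {\<omega> \<in> space M. w < W i \<omega>} = prob {\<omega> \<in> space M. 1 / Y i \<omega> < c * (1 / X i \<omega>)}"
  proof (rule prob_eq_AE)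
    show "AE \<omega> in M. w < W i \<omega> \<longleftrightarrow> 1 / Y i \<omega> < c * (1 / X i \<omega>)"
      using AE_X_Y_pos
    proof eventually_elim
      case (elim \<omega>)
      then have "0 < X i \<omega>" "0 < Y i \<omega>"
        by auto
      then show ?case
        using w by (simp add: W_def c_def field_simps)
    qed
  qed simp_all
  also have "\<dots> = 1 / (1 + 1 / c)"
  proof (rule prob_exponential_less)
    show "distributed M lborel (\<lambda>\<omega>. c * (1 / X i \<omega>)) (exponential_density (1 / c))"
      using erlang_distributed_mult_const[OF frechet_inverse_exponential[OF X_measurable X_frechet] c]
      by simp
    have "indep_var borel ((\<lambda>x. 1 / x) \<circ> Y i) borel ((\<lambda>x. c * (1 / x)) \<circ> X i)"
      by (rule indep_var_compose[OF indep_var_Y_X]) measurable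
    then show "indep_var borel (\<lambda>\<omega>. 1 / Y i \<omega>) borel (\<lambda>\<omega>. c * (1 / X i \<omega>))"
      by (simp add: comp_def)
  qed (use c frechet_inverse_exponential[OF Y_measurable Y_frechet] in simp_all)
  also have "\<dots> = 1 - w"
    using w by (simp add: c_def field_simps)
  finally show ?thesis .
qed

lemma prob_W_le:
  assumes t: "0 \<le> t" "t \<le> 1"
  shows "prob {\<omega> \<in> space M. W i \<omega> \<le> t} = t"
proof -
  have "prob {\<omega> \<in> space M. W i \<omega> \<le> t} = 1 - prob {\<omega> \<in> space M. t < W i \<omega>}"
    by (subst prob_compl[symmetric]) (auto intro!: arg_cong[where f=prob])
  also have "\<dots> = t"
  proof (cases "0 < t \<and> t < 1")
    case True
    then show ?thesis
      using prob_W_greater by simp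
  next
    case False
    then have "t = 0 \<or> t = 1"
      using t by auto
    have "AE \<omega> in M. t < W i \<omega> \<longleftrightarrow> t = 0"
      using AE_W_bounds
    proof eventually_elim
      case (elim \<omega>)
      then have "0 < W i \<omega>" "W i \<omega> < 1"
        by auto
      then show ?case
        using \<open>t = 0 \<or> t = 1\<close> by auto
    qed
    then have "prob {\<omega> \<in> space M. t < W i \<omega>} = prob {\<omega> \<in> space M. t = 0}"
      by (intro prob_eq_AE) auto
    then show ?thesis
      using \<open>t = 0 \<or> t = 1\<close> by (auto simp: prob_space)
  qed
  finally show ?thesis .
qed

lemma W_uniform: "distributed M lborel (W i) (\<lambda>x. ennreal (indicator {0..1} x))"
  using uniform_distrI_borel_atLeastAtMost[OF W_measurable zero_less_one, of i] prob_W_le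
  by simp

lemma prob_W_in:
  assumes [measurable]: "S \<in> sets borel"
  shows "prob {\<omega> \<in> space M. W i \<omega> \<in> S} = measure lborel (S \<inter> {0..1})"
proof -
  have "emeasure M {\<omega> \<in> space M. W i \<omega> \<in> S} = emeasure (distr M lborel (W i)) S"
    by (subst emeasure_distr) (auto intro!: arg_cong[where f="emeasure M"])
  also have "\<dots> = (\<integral>\<^sup>+x. ennreal (indicator {0..1} x) * indicator S x \<partial>lborel)"
    unfolding distributed_distr_eq_density[OF W_uniform] by (simp add: emeasure_density)
  also have "\<dots> = (\<integral>\<^sup>+x. indicator (S \<inter> {0..1}) x \<partial>lborel)"
    by (intro nn_integral_cong) (simp split: split_indicator)
  also have "\<dots> = emeasure lborel (S \<inter> {0..1})"
    by simp
  finally show ?thesis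
    by (simp add: measure_def)
qed

lemma prob_all_W_in:
  assumes "S \<in> sets borel"
  shows "prob {\<omega> \<in> space M. \<forall>i<n. W i \<omega> \<in> S} = measure lborel (S \<inter> {0..1}) ^ n"
proof (cases "n = 0")
  case True
  then show ?thesis
    by (simp add: prob_space)
next
  case False
  have "prob (\<Inter>i\<in>{..<n}. W i -` S \<inter> space M) = (\<Prod>i<n. prob (W i -` S \<inter> space M))"
    using False assms by (intro indep_varsD[OF indep_vars_W]) auto
  moreover have "(\<Inter>i\<in>{..<n}. W i -` S \<inter> space M) = {\<omega> \<in> space M. \<forall>i<n. W i \<omega> \<in> S}"
    using False by auto
  moreover have "W i -` S \<inter> space M = {\<omega> \<in> space M. W i \<omega> \<in> S}" for i
    by auto
  ultimately show ?thesis
    using prob_W_in[OF assms] by simp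
qed

lemma prob_wmin_wmax_box:
  assumes "0 < n"
  shows "prob {\<omega> \<in> space M. a \<le> wmin n \<omega> \<and> wmax n \<omega> < b} = measure lborel ({a..<b} \<inter> {0..1}) ^ n"
proof -
  have "{\<omega> \<in> space M. a \<le> wmin n \<omega> \<and> wmax n \<omega> < b} = {\<omega> \<in> space M. \<forall>i<n. W i \<omega> \<in> {a..<b}}"
    using assms by (auto simp: le_wmin_iff wmax_less_iff)
  then show ?thesis
    using prob_all_W_in[of "{a..<b}" n] by simp
qed

lemma prob_wmin_wmax_strip:
  assumes "0 < n" "0 \<le> a" "a \<le> a'" "a' \<le> b" "b \<le> 1"
  shows "prob {\<omega> \<in> space M. a \<le> wmin n \<omega> \<and> wmin n \<omega> < a' \<and> wmax n \<omega> < b} = (b - a) ^ n - (b - a') ^ n"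
proof -
  let ?box = "\<lambda>c. {\<omega> \<in> space M. c \<le> wmin n \<omega> \<and> wmax n \<omega> < b}"
  have "{\<omega> \<in> space M. a \<le> wmin n \<omega> \<and> wmin n \<omega> < a' \<and> wmax n \<omega> < b} = ?box a - ?box a'"
    by auto
  moreover have "prob (?box a - ?box a') = prob (?box a) - prob (?box a')"
    using assms by (intro finite_measure_Diff) auto
  moreover have "{c..<b} \<inter> {0..1} = {c..<b}" if "0 \<le> c" for c
    using that assms by auto
  ultimately show ?thesis
    using assms by (simp add: prob_wmin_wmax_box)
qed

lemma max_ratio_measurable[measurable]:
  "max_ratio Y X n \<in> borel_measurable M" "max_ratio X Y n \<in> borel_measurable M"
  unfolding max_ratio_def by measurable

text \<open>\<open>W\<^sub>i\<close> is an increasing function of \<open>Y\<^sub>i/X\<^sub>i\<close> and a decreasing one of \<open>X\<^sub>i/Y\<^sub>i\<close>, so the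
  extremes of the \<open>W\<^sub>i\<close> are functions of the two maximal ratios.\<close>
lemma AE_wmin_wmax:
  "AE \<omega> in M. \<forall>n>0. 0 < wmin n \<omega> \<and> wmax n \<omega> < 1 \<and>
     wmax n \<omega> = 1 - 1 / (1 + max_ratio Y X n \<omega>) \<and> wmin n \<omega> = 1 / (1 + max_ratio X Y n \<omega>) \<and>
     0 < max_ratio Y X n \<omega> \<and> 0 < max_ratio X Y n \<omega>"
  using AE_X_Y_pos
proof eventually_elim
  case (elim \<omega>)
  show ?case
  proof (intro allI impI)
    fix n :: nat
    assume "0 < n"
    let ?U = "max_ratio Y X n \<omega>" and ?V = "max_ratio X Y n \<omega>"
    let ?h = "\<lambda>u::real. 1 - 1 / (1 + u)" and ?g = "\<lambda>u::real. 1 / (1 + u)"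
    have I: "finite {..<n}" "{..<n} \<noteq> {}"
      using \<open>0 < n\<close> by auto
    have ratios_pos: "(\<lambda>i. Y i \<omega> / X i \<omega>) ` {..<n} \<subseteq> {0<..}" "(\<lambda>i. X i \<omega> / Y i \<omega>) ` {..<n} \<subseteq> {0<..}"
      using elim by auto
    have "mono_on {0<..} ?h" "antimono_on {0<..} ?g"
      by (auto intro!: monotone_onI simp: frac_le)
    then have "?h ?U = Max (?h ` (\<lambda>i. Y i \<omega> / X i \<omega>) ` {..<n})"
      and "?g ?V = Min (?g ` (\<lambda>i. X i \<omega> / Y i \<omega>) ` {..<n})"
      unfolding max_ratio_def using I ratios_pos
      by (intro mono_on_Max_commute antimono_on_Max_commute; simp)+
    moreover have "?h (Y i \<omega> / X i \<omega>) = W i \<omega>" "?g (X i \<omega> / Y i \<omega>) = W i \<omega>" for i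
      using elim[rule_format, of i] by (simp_all add: W_def field_simps)
    ultimately have "wmax n \<omega> = ?h ?U" "wmin n \<omega> = ?g ?V"
      by (simp_all add: wmax_def wmin_def image_image)
    moreover have "0 < ?U" "0 < ?V"
      unfolding max_ratio_def using I elim \<open>0 < n\<close> by (auto simp: Max_gr_iff)
    ultimately show "0 < wmin n \<omega> \<and> wmax n \<omega> < 1 \<and> wmax n \<omega> = ?h ?U \<and> wmin n \<omega> = ?g ?V \<and>
        0 < ?U \<and> 0 < ?V"
      by simp
  qed
qed

lemma prob_max_ratio_le:
  assumes n: "0 < n" and x: "0 < x" and nx: "1 < real n * x"
  shows "prob {\<omega> \<in> space M. (max_ratio Y X n \<omega> + 1) / real n \<le> x} = (1 - 1 / (real n * x)) ^ n"
proof -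
  let ?b = "1 - 1 / (real n * x)"
  have "prob {\<omega> \<in> space M. (max_ratio Y X n \<omega> + 1) / real n \<le> x} =
      prob {\<omega> \<in> space M. \<forall>i<n. W i \<omega> \<in> {..?b}}"
  proof (rule prob_eq_AE)
    show "AE \<omega> in M. (max_ratio Y X n \<omega> + 1) / real n \<le> x \<longleftrightarrow> (\<forall>i<n. W i \<omega> \<in> {..?b})"
      using AE_wmin_wmax
    proof eventually_elim
      case (elim \<omega>)
      then have "wmax n \<omega> = 1 - 1 / (1 + max_ratio Y X n \<omega>)" "0 < max_ratio Y X n \<omega>"
        using n by auto
      moreover have "(max_ratio Y X n \<omega> + 1) / real n \<le> x \<longleftrightarrow>
          1 / (real n * x) \<le> 1 / (1 + max_ratio Y X n \<omega>)"
        using n x \<open>0 < max_ratio Y X n \<omega>\<close> by (simp add: field_simps)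
      ultimately have "(max_ratio Y X n \<omega> + 1) / real n \<le> x \<longleftrightarrow> wmax n \<omega> \<le> ?b"
        by auto
      then show ?case
        using n by (simp add: wmax_le_iff)
    qed
  qed simp_all
  also have "{..?b} \<inter> {0..1} = {0..?b}"
    using nx by auto
  then have "prob {\<omega> \<in> space M. \<forall>i<n. W i \<omega> \<in> {..?b}} = ?b ^ n"
    using nx prob_all_W_in[of "{..?b}" n] by simp
  finally show ?thesis .
qed

lemma prob_max_ratio_le_both:
  assumes n: "0 < n" and x: "0 < x" and y: "0 < y"
    and xy: "1 / (real n * x) + 1 / (real n * y) \<le> 1"
  shows "prob {\<omega> \<in> space M. (max_ratio Y X n \<omega> + 1) / real n \<le> x \<and> (max_ratio X Y n \<omega> + 1) / real n \<le> y} =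
    (1 - 1 / (real n * x) - 1 / (real n * y)) ^ n"
proof -
  let ?a = "1 / (real n * y)" and ?b = "1 - 1 / (real n * x)"
  have "prob {\<omega> \<in> space M. (max_ratio Y X n \<omega> + 1) / real n \<le> x \<and> (max_ratio X Y n \<omega> + 1) / real n \<le> y} =
      prob {\<omega> \<in> space M. \<forall>i<n. W i \<omega> \<in> {?a..?b}}"
  proof (rule prob_eq_AE)
    show "AE \<omega> in M. ((max_ratio Y X n \<omega> + 1) / real n \<le> x \<and> (max_ratio X Y n \<omega> + 1) / real n \<le> y) \<longleftrightarrow>
        (\<forall>i<n. W i \<omega> \<in> {?a..?b})"
      using AE_wmin_wmax
    proof eventually_elim
      case (elim \<omega>)
      then have "wmax n \<omega> = 1 - 1 / (1 + max_ratio Y X n \<omega>)" "0 < max_ratio Y X n \<omega>"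
        "wmin n \<omega> = 1 / (1 + max_ratio X Y n \<omega>)" "0 < max_ratio X Y n \<omega>"
        using n by auto
      moreover have "(max_ratio Y X n \<omega> + 1) / real n \<le> x \<longleftrightarrow>
          1 / (real n * x) \<le> 1 / (1 + max_ratio Y X n \<omega>)"
        and "(max_ratio X Y n \<omega> + 1) / real n \<le> y \<longleftrightarrow>
          1 / (real n * y) \<le> 1 / (1 + max_ratio X Y n \<omega>)"
        using n x y \<open>0 < max_ratio Y X n \<omega>\<close> \<open>0 < max_ratio X Y n \<omega>\<close>
        by (simp_all add: field_simps)
      ultimately have "(max_ratio Y X n \<omega> + 1) / real n \<le> x \<longleftrightarrow> wmax n \<omega> \<le> ?b"
        and "(max_ratio X Y n \<omega> + 1) / real n \<le> y \<longleftrightarrow> ?a \<le> wmin n \<omega>"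
        by auto
      then show ?case
        using n by (auto simp: wmax_le_iff le_wmin_iff)
    qed
  qed simp_all
  also have "{?a..?b} \<inter> {0..1} = {?a..?b}"
    using n x y by auto
  then have "prob {\<omega> \<in> space M. \<forall>i<n. W i \<omega> \<in> {?a..?b}} = (?b - ?a) ^ n"
    using xy prob_all_W_in[of "{?a..?b}" n] by simp
  finally show ?thesis
    by simp
qed

lemma tendsto_prob_max_ratio_le:
  assumes "0 < x"
  shows "(\<lambda>n. prob {\<omega> \<in> space M. (max_ratio Y X n \<omega> + 1) / real n \<le> x}) \<longlonglongrightarrow> exp (- 1 / x)"
proof -
  have "\<forall>\<^sub>F n in sequentially. 1 / x < real n"
    using filterlim_real_sequentially by (simp add: filterlim_at_top_dense)
  then have "\<forall>\<^sub>F n in sequentially. 0 < n \<and> 1 / x < real n"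
    using eventually_gt_at_top[of 0] by eventually_elim simp
  then have "\<forall>\<^sub>F n in sequentially. prob {\<omega> \<in> space M. (max_ratio Y X n \<omega> + 1) / real n \<le> x} =
      (1 - 1 / (real n * x)) ^ n"
    by eventually_elim (use assms in \<open>intro prob_max_ratio_le, auto simp: field_simps\<close>)
  moreover have "(\<lambda>n. (1 - 1 / (real n * x)) ^ n) \<longlonglongrightarrow> exp (- 1 / x)"
  proof (rule tendsto_power_sequentially)
    have "\<forall>\<^sub>F n in sequentially. real n * ((1 - 1 / (real n * x)) - 1) = - 1 / x"
      using eventually_gt_at_top[of 0] by eventually_elim simp
    then show "(\<lambda>n. real n * ((1 - 1 / (real n * x)) - 1)) \<longlonglongrightarrow> - 1 / x"
      by (rule tendsto_eventually)
  qed
  ultimately show ?thesis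
    by (simp add: tendsto_cong)
qed

lemma tendsto_prob_max_ratio_le_both:
  assumes "0 < x" "0 < y"
  shows "(\<lambda>n. prob {\<omega> \<in> space M. (max_ratio Y X n \<omega> + 1) / real n \<le> x \<and>
      (max_ratio X Y n \<omega> + 1) / real n \<le> y}) \<longlonglongrightarrow> exp (- 1 / x - 1 / y)"
proof -
  have "\<forall>\<^sub>F n in sequentially. 1 / x + 1 / y < real n"
    using filterlim_real_sequentially by (simp add: filterlim_at_top_dense)
  then have "\<forall>\<^sub>F n in sequentially. 0 < n \<and> 1 / x + 1 / y < real n"
    using eventually_gt_at_top[of 0] by eventually_elim simp
  then have "\<forall>\<^sub>F n in sequentially. prob {\<omega> \<in> space M. (max_ratio Y X n \<omega> + 1) / real n \<le> x \<and>
      (max_ratio X Y n \<omega> + 1) / real n \<le> y} = (1 - 1 / (real n * x) - 1 / (real n * y)) ^ n"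
  proof eventually_elim
    case (elim n)
    then have "1 / (real n * x) + 1 / (real n * y) \<le> 1"
      using assms by (simp add: field_simps)
    then show ?case
      using elim assms by (intro prob_max_ratio_le_both) auto
  qed
  moreover have "(\<lambda>n. (1 - 1 / (real n * x) - 1 / (real n * y)) ^ n) \<longlonglongrightarrow> exp (- 1 / x - 1 / y)"
  proof (rule tendsto_power_sequentially)
    have "\<forall>\<^sub>F n in sequentially.
        real n * ((1 - 1 / (real n * x) - 1 / (real n * y)) - 1) = - 1 / x - 1 / y"
      using eventually_gt_at_top[of 0] by eventually_elim (simp add: field_simps)
    then show "(\<lambda>n. real n * ((1 - 1 / (real n * x) - 1 / (real n * y)) - 1)) \<longlonglongrightarrow> - 1 / x - 1 / y"
      by (rule tendsto_eventually)
  qed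
  ultimately show ?thesis
    by (simp add: tendsto_cong)
qed

text \<open>With \<open>L d = 1 - r\<close>, the slices for \<open>c = r\<close> lie inside the event \<open>R\<^sub>n < r\<close>, and those for
  \<open>c = r + d\<close> cover it almost surely.\<close>
definition wmin_slice :: "nat \<Rightarrow> real \<Rightarrow> nat \<Rightarrow> real \<Rightarrow> nat \<Rightarrow> 'a set"
  where "wmin_slice n d L c j = {\<omega> \<in> space M. real j * d \<le> wmin n \<omega> \<and>
    (j < L \<longrightarrow> wmin n \<omega> < real (Suc j) * d) \<and> wmax n \<omega> < c + real j * d}"

lemma wmin_slice_sets[measurable]: "wmin_slice n d L c j \<in> sets M"
  unfolding wmin_slice_def by measurable

lemma disjoint_family_wmin_slice:
  assumes "0 < d"
  shows "disjoint_family_on (wmin_slice n d L c) {..L}"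
proof -
  have disjoint: "wmin_slice n d L c j \<inter> wmin_slice n d L c k = {}" if "j < k" "k \<le> L" for j k
  proof -
    have "real (Suc j) * d \<le> real k * d"
      using that assms by (intro mult_right_mono) auto
    then show ?thesis
      using that by (auto simp: wmin_slice_def)
  qed
  show ?thesis
    unfolding disjoint_family_on_def
  proof (intro ballI impI)
    fix j k
    assume "j \<in> {..L}" "k \<in> {..L}" "j \<noteq> k"
    then consider "j < k" "k \<le> L" | "k < j" "j \<le> L"
      by (auto simp: nat_neq_iff)
    then show "wmin_slice n d L c j \<inter> wmin_slice n d L c k = {}"
      by cases (use disjoint in \<open>auto simp: Int_commute\<close>)
  qed
qed

lemma sum_prob_wmin_slice:
  assumes n: "0 < n" and d: "0 < d" "d \<le> c" "c + real L * d \<le> 1 + d"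
  shows "(\<Sum>j\<le>L. prob (wmin_slice n d L c j)) =
    real L * (c ^ n - (c - d) ^ n) + measure lborel ({real L * d..<c + real L * d} \<inter> {0..1}) ^ n"
proof -
  have "prob (wmin_slice n d L c j) = c ^ n - (c - d) ^ n" if "j < L" for j
  proof -
    have "real (Suc j) * d \<le> real L * d"
      using that d by (intro mult_right_mono) auto
    moreover have "wmin_slice n d L c j = {\<omega> \<in> space M. real j * d \<le> wmin n \<omega> \<and>
        wmin n \<omega> < real (Suc j) * d \<and> wmax n \<omega> < c + real j * d}"
      using that by (auto simp: wmin_slice_def)
    ultimately show ?thesis
      using n d by (simp add: prob_wmin_wmax_strip algebra_simps)
  qed
  moreover have "prob (wmin_slice n d L c L) = measure lborel ({real L * d..<c + real L * d} \<inter> {0..1}) ^ n"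
    using prob_wmin_wmax_box[OF n] by (simp add: wmin_slice_def)
  ultimately show ?thesis
    by (simp add: lessThan_Suc_atMost[symmetric])
qed

lemma prob_range_less_lower:
  assumes n: "0 < n" and r: "0 < r" "r < 1" and L: "0 < L" and d: "(1 - r) / real L \<le> r"
  shows "r ^ n + real n * (1 - r) * (r - (1 - r) / real L) ^ (n - 1) \<le>
    prob {\<omega> \<in> space M. wmax n \<omega> - wmin n \<omega> < r}"
proof -
  define d where "d = (1 - r) / real L"
  have d_pos: "0 < d" and Ld: "real L * d = 1 - r" and d_le: "d \<le> r"
    using r L d by (simp_all add: d_def)
  have "r ^ n + real n * (1 - r) * (r - d) ^ (n - 1) = r ^ n + real L * (real n * d * (r - d) ^ (n - 1))"
    using Ld by simp
  also have "\<dots> \<le> r ^ n + real L * (r ^ n - (r - d) ^ n)"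
    using power_Suc_diff_bounds(1)[of "r - d" r "n - 1"] d_le d_pos n by (intro add_left_mono mult_left_mono) simp_all
  also have "\<dots> = (\<Sum>j\<le>L. prob (wmin_slice n d L r j))"
  proof -
    have "{1 - r..<r + (1 - r)} \<inter> {0..1} = {1 - r..<1}"
      using r by auto
    then show ?thesis
      using sum_prob_wmin_slice[OF n d_pos d_le, of L] r Ld d_pos by simp
  qed
  also have "\<dots> = prob (\<Union>j\<le>L. wmin_slice n d L r j)"
    using disjoint_family_wmin_slice[OF d_pos] by (intro finite_measure_finite_Union[symmetric]) auto
  also have "\<dots> \<le> prob {\<omega> \<in> space M. wmax n \<omega> - wmin n \<omega> < r}"
    by (rule finite_measure_mono) (auto simp: wmin_slice_def)
  finally show ?thesis
    by (simp add: d_def)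
qed

lemma AE_range_less_imp_wmin_slice:
  assumes n: "0 < n" and d_pos: "0 < d" and Ld: "real L * d = 1 - r"
  shows "AE \<omega> in M. wmax n \<omega> - wmin n \<omega> < r \<longrightarrow> \<omega> \<in> (\<Union>j\<le>L. wmin_slice n d L (r + d) j)"
  using AE_wmin_wmax AE_space
proof eventually_elim
  case (elim \<omega>)
  show ?case
  proof
    assume range: "wmax n \<omega> - wmin n \<omega> < r"
    have bounds: "0 < wmin n \<omega>" "wmax n \<omega> < 1"
      using elim(1) n by blast+
    obtain j where j: "j \<le> L" "real j * d \<le> wmin n \<omega>" "j < L \<longrightarrow> wmin n \<omega> < real (Suc j) * d"
      using grid_index_exists[OF d_pos less_imp_le[OF bounds(1)], where L=L] by blast
    have "wmax n \<omega> < r + d + real j * d"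
    proof (cases "j < L")
      case True
      then show ?thesis
        using j range by (simp add: algebra_simps)
    next
      case False
      then show ?thesis
        using j bounds d_pos Ld by simp
    qed
    then show "\<omega> \<in> (\<Union>j\<le>L. wmin_slice n d L (r + d) j)"
      using j elim(2) by (intro UN_I[of j]) (auto simp: wmin_slice_def)
  qed
qed

lemma prob_range_less_upper:
  assumes n: "0 < n" and r: "0 < r" "r < 1" and L: "0 < L"
  shows "prob {\<omega> \<in> space M. wmax n \<omega> - wmin n \<omega> < r} \<le>
    r ^ n + real n * (1 - r) * (r + (1 - r) / real L) ^ (n - 1)"
proof -
  define d where "d = (1 - r) / real L"
  have d_pos: "0 < d" and Ld: "real L * d = 1 - r"
    using r L by (simp_all add: d_def)
  have "prob {\<omega> \<in> space M. wmax n \<omega> - wmin n \<omega> < r} \<le> prob (\<Union>j\<le>L. wmin_slice n d L (r + d) j)"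
    using AE_range_less_imp_wmin_slice[OF n d_pos Ld] by (intro finite_measure_mono_AE) auto
  also have "\<dots> \<le> (\<Sum>j\<le>L. prob (wmin_slice n d L (r + d) j))"
    by (intro finite_measure_subadditive_finite) auto
  also have "\<dots> = r ^ n + real L * ((r + d) ^ n - r ^ n)"
  proof -
    have "{1 - r..<r + d + (1 - r)} \<inter> {0..1} = {1 - r..1}"
      using r d_pos by auto
    then show ?thesis
      using sum_prob_wmin_slice[OF n d_pos, of "r + d" L] r Ld by simp
  qed
  also have "\<dots> \<le> r ^ n + real L * (real n * d * (r + d) ^ (n - 1))"
    using power_Suc_diff_bounds(2)[of r "r + d" "n - 1"] r d_pos n by (intro add_left_mono mult_left_mono) simp_all
  also have "\<dots> = r ^ n + real n * (1 - r) * (r + d) ^ (n - 1)"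
    using Ld by simp
  finally show ?thesis
    by (simp add: d_def add.commute)
qed

text \<open>Both bounds converge to the exact value as the width \<open>(1 - r)/L\<close> of the slices tends to zero.\<close>
lemma prob_range_less:
  assumes n: "0 < n" and r: "0 < r" "r < 1"
  shows "prob {\<omega> \<in> space M. wmax n \<omega> - wmin n \<omega> < r} = r ^ n + real n * (1 - r) * r ^ (n - 1)"
proof (rule antisym)
  let ?P = "prob {\<omega> \<in> space M. wmax n \<omega> - wmin n \<omega> < r}"
  let ?exact = "r ^ n + real n * (1 - r) * r ^ (n - 1)"
  have d_lim: "(\<lambda>L. (1 - r) / real L) \<longlonglongrightarrow> 0"
    using tendsto_mult[OF tendsto_const[of "1 - r"] lim_inverse_n] by (simp add: divide_inverse)
  have "\<forall>\<^sub>F L in sequentially. (1 - r) / r < real L"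
    using filterlim_real_sequentially by (simp add: filterlim_at_top_dense)
  then have "\<forall>\<^sub>F L in sequentially. 0 < L \<and> (1 - r) / real L \<le> r"
    using eventually_gt_at_top[of 0] by eventually_elim (use r in \<open>simp add: field_simps\<close>)
  then have "\<forall>\<^sub>F L in sequentially. r ^ n + real n * (1 - r) * (r - (1 - r) / real L) ^ (n - 1) \<le> ?P"
    by eventually_elim (use prob_range_less_lower[OF n r] in blast)
  moreover have "(\<lambda>L. r ^ n + real n * (1 - r) * (r - (1 - r) / real L) ^ (n - 1)) \<longlonglongrightarrow> ?exact"
    using d_lim by (auto intro!: tendsto_eq_intros)
  ultimately show "?exact \<le> ?P"
    by (intro tendsto_upperbound) auto
  have "\<forall>\<^sub>F L in sequentially. ?P \<le> r ^ n + real n * (1 - r) * (r + (1 - r) / real L) ^ (n - 1)"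
    using eventually_gt_at_top[of 0] by eventually_elim (use prob_range_less_upper[OF n r] in blast)
  moreover have "(\<lambda>L. r ^ n + real n * (1 - r) * (r + (1 - r) / real L) ^ (n - 1)) \<longlonglongrightarrow> ?exact"
    using d_lim by (auto intro!: tendsto_eq_intros)
  ultimately show "?P \<le> ?exact"
    by (intro tendsto_lowerbound) auto
qed

lemma quot_corr_measurable[measurable]: "quot_corr X Y n \<in> borel_measurable M"
  unfolding quot_corr_def[abs_def] by measurable

lemma AE_range_pos:
  assumes "2 \<le> n"
  shows "AE \<omega> in M. 0 < wmax n \<omega> - wmin n \<omega>"
proof -
  let ?f = "\<lambda>r::real. r ^ n + real n * (1 - r) * r ^ (n - 1)"
  let ?P = "prob {\<omega> \<in> space M. wmax n \<omega> - wmin n \<omega> \<le> 0}"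
  have "?P \<le> ?f 0"
  proof (rule tendsto_lowerbound)
    show "(?f \<longlongrightarrow> ?f 0) (at_right 0)"
      by (intro tendsto_intros)
    show "\<forall>\<^sub>F r in at_right 0. ?P \<le> ?f r"
      using eventually_at_right_real[OF zero_less_one]
    proof eventually_elim
      case (elim r)
      then have "?P \<le> prob {\<omega> \<in> space M. wmax n \<omega> - wmin n \<omega> < r}"
        by (intro finite_measure_mono) auto
      then show ?case
        using prob_range_less[of n r] elim assms by simp
    qed
  qed simp
  moreover have "?f 0 = 0"
    using assms by (simp add: power_0_left)
  ultimately have "?P = 0"
    using measure_nonneg[of M] by (simp add: order.antisym)
  then show ?thesis
    by (subst (asm) prob_Collect_eq_0) (auto simp: not_le)
qed

text \<open>For the two maximal ratios \<open>u, v\<close> one has \<open>1/(1 + u) + 1/(1 + v) = 1 - R\<^sub>n\<close>, so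
  \<open>quot_corr_bounds\<close> applies as soon as \<open>R\<^sub>n > 0\<close>.\<close>
lemma AE_quot_corr_bounds:
  assumes "2 \<le> n"
  shows "AE \<omega> in M. 0 < wmax n \<omega> - wmin n \<omega> \<and> wmax n \<omega> - wmin n \<omega> < 1 \<and>
    1 - (wmax n \<omega> - wmin n \<omega>) \<le> quot_corr X Y n \<omega> \<and>
    quot_corr X Y n \<omega> \<le> (1 - (wmax n \<omega> - wmin n \<omega>)) / (wmax n \<omega> - wmin n \<omega>)"
  using AE_range_pos[OF assms] AE_wmin_wmax
proof eventually_elim
  case (elim \<omega>)
  let ?u = "max_ratio Y X n \<omega>" and ?v = "max_ratio X Y n \<omega>" and ?R = "wmax n \<omega> - wmin n \<omega>"
  have "0 < n"
    using assms by simp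
  then have bounds: "0 < wmin n \<omega>" "wmax n \<omega> < 1"
    and eqs: "wmax n \<omega> = 1 - 1 / (1 + ?u)" "wmin n \<omega> = 1 / (1 + ?v)"
    and uv: "0 < ?u" "0 < ?v"
    using elim(2) by blast+
  have R: "0 < ?R" "?R < 1"
    using elim(1) bounds by linarith+
  have T: "1 / (1 + ?u) + 1 / (1 + ?v) = 1 - ?R"
    unfolding eqs by simp
  have "1 - ?R \<le> quot_corr X Y n \<omega>" "quot_corr X Y n \<omega> \<le> (1 - ?R) / (1 - (1 - ?R))"
    using quot_corr_bounds[of ?u ?v, unfolded T] uv R unfolding quot_corr_def by simp_all
  then show ?case
    using R by simp
qed

lemma prob_range_ge:
  assumes "0 < n" "0 < s" "s < 1"
  shows "prob {\<omega> \<in> space M. s \<le> wmax n \<omega> - wmin n \<omega>} = 1 - (s ^ n + real n * (1 - s) * s ^ (n - 1))"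
proof -
  have "prob {\<omega> \<in> space M. s \<le> wmax n \<omega> - wmin n \<omega>} =
      1 - prob {\<omega> \<in> space M. wmax n \<omega> - wmin n \<omega> < s}"
    by (subst prob_compl[symmetric]) (auto intro!: arg_cong[where f=prob])
  then show ?thesis
    using prob_range_less[OF assms] by simp
qed

lemma tendsto_prob_range_ge:
  assumes s: "\<forall>\<^sub>F n in sequentially. 0 < s n \<and> s n < 1" and t: "(\<lambda>n. real n * (1 - s n)) \<longlonglongrightarrow> t"
  shows "(\<lambda>n. prob {\<omega> \<in> space M. s n \<le> wmax n \<omega> - wmin n \<omega>}) \<longlonglongrightarrow> 1 - (exp (- t) + t * exp (- t))"
proof -
  have eq: "\<forall>\<^sub>F n in sequentially. prob {\<omega> \<in> space M. s n \<le> wmax n \<omega> - wmin n \<omega>} =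
      1 - (s n ^ n + real n * (1 - s n) * s n ^ (n - 1))"
    using s eventually_gt_at_top[of 0] by eventually_elim (intro prob_range_ge; simp)
  have "(\<lambda>n. - (real n * (1 - s n))) \<longlonglongrightarrow> - t"
    by (rule tendsto_minus[OF t])
  moreover have "(\<lambda>n. - (real n * (1 - s n))) = (\<lambda>n. real n * (s n - 1))"
    by (simp add: fun_eq_iff algebra_simps)
  ultimately have "(\<lambda>n. real n * (s n - 1)) \<longlonglongrightarrow> - t"
    by simp
  then have "(\<lambda>n. s n ^ n) \<longlonglongrightarrow> exp (- t)" "(\<lambda>n. s n ^ (n - 1)) \<longlonglongrightarrow> exp (- t)"
    by (rule tendsto_power_sequentially tendsto_power_pred_sequentially)+
  then have "(\<lambda>n. 1 - (s n ^ n + real n * (1 - s n) * s n ^ (n - 1))) \<longlonglongrightarrow> 1 - (exp (- t) + t * exp (- t))"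
    by (intro tendsto_diff tendsto_add tendsto_mult tendsto_const t)
  with eq show ?thesis
    by (simp add: tendsto_cong)
qed

lemma prob_n_quot_corr_le_nonpos:
  assumes n: "2 \<le> n" and t: "t \<le> 0"
  shows "prob {\<omega> \<in> space M. real n * quot_corr X Y n \<omega> \<le> t} = 0"
proof (rule prob_eq_0_AE)
  show "AE \<omega> in M. \<not> real n * quot_corr X Y n \<omega> \<le> t"
    using AE_quot_corr_bounds[OF n]
  proof eventually_elim
    case (elim \<omega>)
    then have "0 < quot_corr X Y n \<omega>"
      by linarith
    then have "0 < real n * quot_corr X Y n \<omega>"
      using n by simp
    then show ?case
      using t by linarith
  qed
qed

lemma prob_n_quot_corr_le_lower:
  assumes n: "2 \<le> n" and t: "0 < t"
  shows "prob {\<omega> \<in> space M. real n / (real n + t) \<le> wmax n \<omega> - wmin n \<omega>} \<le>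
    prob {\<omega> \<in> space M. real n * quot_corr X Y n \<omega> \<le> t}"
proof -
  have n_pos: "0 < real n"
    using n by simp
  have "AE \<omega> in M. real n / (real n + t) \<le> wmax n \<omega> - wmin n \<omega> \<longrightarrow> real n * quot_corr X Y n \<omega> \<le> t"
    using AE_quot_corr_bounds[OF n]
  proof eventually_elim
    case (elim \<omega>)
    let ?R = "wmax n \<omega> - wmin n \<omega>"
    have R_pos: "0 < ?R" and q_le: "quot_corr X Y n \<omega> \<le> (1 - ?R) / ?R"
      using elim by blast+
    show ?case
    proof
      assume "real n / (real n + t) \<le> ?R"
      then have "inverse ?R \<le> inverse (real n / (real n + t))"
        using n_pos t by (intro le_imp_inverse_le) auto
      moreover have "(1 - ?R) / ?R = inverse ?R - 1"
        using R_pos by (simp add: field_simps)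
      moreover have "inverse (real n / (real n + t)) - 1 = t / real n"
        using n_pos t by (simp add: field_simps)
      ultimately have "quot_corr X Y n \<omega> \<le> t / real n"
        using q_le by linarith
      then show "real n * quot_corr X Y n \<omega> \<le> t"
        using n_pos by (simp add: le_divide_eq mult.commute)
    qed
  qed
  then show ?thesis
    by (rule prob_mono_AE) measurable
qed

lemma prob_n_quot_corr_le_upper:
  assumes n: "2 \<le> n"
  shows "prob {\<omega> \<in> space M. real n * quot_corr X Y n \<omega> \<le> t} \<le>
    prob {\<omega> \<in> space M. 1 - t / real n \<le> wmax n \<omega> - wmin n \<omega>}"
proof -
  have n_pos: "0 < real n"
    using n by simp
  have "AE \<omega> in M. real n * quot_corr X Y n \<omega> \<le> t \<longrightarrow> 1 - t / real n \<le> wmax n \<omega> - wmin n \<omega>"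
    using AE_quot_corr_bounds[OF n]
  proof eventually_elim
    case (elim \<omega>)
    let ?R = "wmax n \<omega> - wmin n \<omega>"
    have q_ge: "1 - ?R \<le> quot_corr X Y n \<omega>"
      using elim by blast
    show ?case
    proof
      assume "real n * quot_corr X Y n \<omega> \<le> t"
      moreover have "real n * (1 - ?R) \<le> real n * quot_corr X Y n \<omega>"
        using q_ge n_pos by (intro mult_left_mono) auto
      ultimately have "real n * (1 - ?R) \<le> t"
        by linarith
      then have "1 - ?R \<le> t / real n"
        using n_pos by (simp add: le_divide_eq mult.commute)
      then show "1 - t / real n \<le> ?R"
        by linarith
    qed
  qed
  then show ?thesis
    by (rule prob_mono_AE) measurable
qed

lemma tendsto_prob_n_quot_corr_le:
  assumes t: "0 < t"
  shows "(\<lambda>n. prob {\<omega> \<in> space M. real n * quot_corr X Y n \<omega> \<le> t}) \<longlonglongrightarrow> 1 - (exp (- t) + t * exp (- t))"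
proof (rule tendsto_sandwich)
  have "\<forall>\<^sub>F n in sequentially. t < real n"
    using filterlim_real_sequentially by (simp add: filterlim_at_top_dense)
  then have ev: "\<forall>\<^sub>F n in sequentially. 2 \<le> n \<and> t < real n"
    using eventually_ge_at_top[of "2::nat"] by eventually_elim simp
  show "\<forall>\<^sub>F n in sequentially. prob {\<omega> \<in> space M. real n / (real n + t) \<le> wmax n \<omega> - wmin n \<omega>} \<le>
      prob {\<omega> \<in> space M. real n * quot_corr X Y n \<omega> \<le> t}"
    using ev by eventually_elim (use t in \<open>simp add: prob_n_quot_corr_le_lower prob_n_quot_corr_le_upper\<close>)
  show "\<forall>\<^sub>F n in sequentially. prob {\<omega> \<in> space M. real n * quot_corr X Y n \<omega> \<le> t} \<le>
      prob {\<omega> \<in> space M. 1 - t / real n \<le> wmax n \<omega> - wmin n \<omega>}"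
    using ev by eventually_elim (use t in \<open>simp add: prob_n_quot_corr_le_lower prob_n_quot_corr_le_upper\<close>)
  have frac_lim: "(\<lambda>n. t / (t + real n)) \<longlonglongrightarrow> 0"
    by (intro tendsto_divide_0[OF tendsto_const] filterlim_at_top_imp_at_infinity
        filterlim_tendsto_add_at_top[OF tendsto_const filterlim_real_sequentially])
  have "(\<lambda>n. t - t * (t / (t + real n))) \<longlonglongrightarrow> t - t * 0"
    by (intro tendsto_intros frac_lim)
  moreover have "real n * (1 - real n / (real n + t)) = t - t * (t / (t + real n))" for n
    using t by (simp add: field_simps)
  ultimately have "(\<lambda>n. real n * (1 - real n / (real n + t))) \<longlonglongrightarrow> t"
    by simp
  then show "(\<lambda>n. prob {\<omega> \<in> space M. real n / (real n + t) \<le> wmax n \<omega> - wmin n \<omega>}) \<longlonglongrightarrow>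
      1 - (exp (- t) + t * exp (- t))"
    using t by (intro tendsto_prob_range_ge) (auto simp: field_simps)
  have "\<forall>\<^sub>F n in sequentially. real n * (1 - (1 - t / real n)) = t"
    using eventually_gt_at_top[of 0] by eventually_elim simp
  then have "(\<lambda>n. real n * (1 - (1 - t / real n))) \<longlonglongrightarrow> t"
    by (rule tendsto_eventually)
  then show "(\<lambda>n. prob {\<omega> \<in> space M. 1 - t / real n \<le> wmax n \<omega> - wmin n \<omega>}) \<longlonglongrightarrow>
      1 - (exp (- t) + t * exp (- t))"
    using ev t by (intro tendsto_prob_range_ge) (auto elim!: eventually_mono simp: field_simps)
qed

lemma weak_conv_n_quot_corr: "weak_conv_m (\<lambda>n. distr M borel (\<lambda>\<omega>. real n * quot_corr X Y n \<omega>)) gamma21"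
  unfolding weak_conv_m_def weak_conv_def
proof (intro allI impI)
  fix t :: real
  have cdf_eq: "cdf (distr M borel (\<lambda>\<omega>. real n * quot_corr X Y n \<omega>)) t =
      prob {\<omega> \<in> space M. real n * quot_corr X Y n \<omega> \<le> t}" for n
    by (simp add: prob_le_eq_cdf)
  show "(\<lambda>n. cdf (distr M borel (\<lambda>\<omega>. real n * quot_corr X Y n \<omega>)) t) \<longlonglongrightarrow> cdf gamma21 t"
  proof (cases "0 < t")
    case True
    then show ?thesis
      by (simp add: cdf_eq cdf_gamma21 tendsto_prob_n_quot_corr_le)
  next
    case False
    have "\<forall>\<^sub>F n in sequentially. cdf (distr M borel (\<lambda>\<omega>. real n * quot_corr X Y n \<omega>)) t = 0"
      using eventually_ge_at_top[of "2::nat"]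
      by eventually_elim (use False in \<open>simp add: cdf_eq prob_n_quot_corr_le_nonpos\<close>)
    moreover have "cdf gamma21 t = 0"
      using False by (simp add: cdf_gamma21)
    ultimately show ?thesis
      by (simp add: tendsto_eventually)
  qed
qed

end

theorem theorem3p1:
  fixes M :: "'a measure" and X Y :: "nat \<Rightarrow> 'a \<Rightarrow> real"
  assumes "prob_space M"
    and "\<And>i. X i \<in> borel_measurable M"
    and "\<And>i. Y i \<in> borel_measurable M"
    and "prob_space.indep_vars M (\<lambda>_. borel)
           (\<lambda>k. case k of Inl i \<Rightarrow> X i | Inr i \<Rightarrow> Y i) UNIV"
    and "\<And>i. cdf (distr M borel (X i)) = frechet_cdf"
    and "\<And>i. cdf (distr M borel (Y i)) = frechet_cdf"
  shows "(\<forall>x>0. (\<lambda>n. measure M {\<omega> \<in> space M.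
              (max_ratio Y X n \<omega> + 1) / real n \<le> x}) \<longlonglongrightarrow> exp (- 1 / x))
    \<and> (\<forall>x>0. \<forall>y>0. (\<lambda>n. measure M {\<omega> \<in> space M.
              (max_ratio Y X n \<omega> + 1) / real n \<le> x \<and>
              (max_ratio X Y n \<omega> + 1) / real n \<le> y}) \<longlonglongrightarrow> exp (- 1 / x - 1 / y))
    \<and> weak_conv_m (\<lambda>n. distr M borel (\<lambda>\<omega>. real n * quot_corr X Y n \<omega>)) gamma21"
proof -
  interpret frechet_sample M X Y
    using assms by (simp add: frechet_sample_def frechet_sample_axioms_def)
  show ?thesis
    using tendsto_prob_max_ratio_le tendsto_prob_max_ratio_le_both weak_conv_n_quot_corr by blast
qed

end
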